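(* Let $X\subseteq W$ be a block subspace, $(y_0,y_1,y_2,\dots)$ a block sequence in $W$, $\alpha<\omega_1$ and $K\ge1$. Assume that II has a strategy in $F^{\omega\cdot\alpha}_X$ to play $(x_0,\dots,x_k)$ such that $(x_0,\dots,x_k)\sim_K(y_0,\dots,y_k)$. Then for every block sequence $(z_n)$ in $[y_n]$, II has a strategy in $F^\alpha_X$ to play $(v_0,\dots,v_k)$ such that $(v_0,\dots,v_k)\sim_K(z_0,\dots,z_k)$.
   Context: Let $\mathcal W$ be a real Banach space with Schauder basis $(e_n)$. Fix a countable subfield $\mathfrak F\subseteq\mathbb R$ such that $\|\sum_{n\le m}a_ne_n\|\in\mathfrak F$ whenever all $a_n\in\mathfrak F$, and let $W$ be the $\mathfrak F$-vector space of finite $\mathfrak F$-linear combinations of the $e_n$, with the norm of $\mathcal W$; subspaces and spans $[\cdot]$ are $\mathfrak F$-linear in $W$. For nonzero $x=\sum a_ne_n$, ${\rm supp}(x)=\{n:a_n\neq0\}$, and $x<y$ means $\max{\rm supp}(x)<\min{\rm supp}(y)$. A block sequence is a sequence of nonzero vectors $x_0<x_1<\dots$; a block subspace is the span of an infinite block sequence. $[e_i]_{i>n}$ is the span of $\{e_i:i>n\}$. $(x_i)_{i\le k}\sim_K(y_i)_{i\le k}$ means $\frac1K\|\sum a_ix_i\|\le\|\sum a_iy_i\|\le K\|\sum a_ix_i\|$ for all real $a_i$. $\omega\cdot\alpha$ is ordinal multiplication. Game $F^\gamma_X$ ($\gamma$ countable ordinal): in rounds $l=0,1,\dots$, I plays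 an integer $n_l$ and an ordinal $\xi_l$ ($\xi_0<\gamma$, $\xi_l<\xi_{l-1}$); II responds with a finite-dimensional $F_l\subseteq X\cap[e_i]_{i>n_l}$ and a nonzero $x_l\in F_0+\dots+F_l$; it ends after II's response to $\xi_k=0$ (immediately if $\gamma=0$), with outcome $(x_0,\dots,x_k)$. "II has a strategy to play ... such that P" means II can ensure the outcome satisfies P. *)

theory Defs
  imports "HOL-Analysis.Analysis"
begin

definition schauder_basis :: "(nat \<Rightarrow> 'a::banach) \<Rightarrow> bool" where
  "schauder_basis e \<longleftrightarrow>
     (\<forall>x. \<exists>!a::nat \<Rightarrow> real. (\<lambda>m. \<Sum>i<m. a i *\<^sub>R e i) \<longlonglongrightarrow> x)"

definition subfield_real :: "real set \<Rightarrow> bool" where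
  "subfield_real F \<longleftrightarrow> 0 \<in> F \<and> 1 \<in> F \<and>
     (\<forall>a\<in>F. \<forall>b\<in>F. a + b \<in> F \<and> a * b \<in> F) \<and>
     (\<forall>a\<in>F. - a \<in> F) \<and> (\<forall>a\<in>F. a \<noteq> 0 \<longrightarrow> inverse a \<in> F)"

definition spanF :: "real set \<Rightarrow> ('a::real_vector) set \<Rightarrow> 'a set" where
  "spanF F S = {\<Sum>i<(m::nat). c i *\<^sub>R v i | m c v. \<forall>i<m. c i \<in> F \<and> v i \<in> S}"

definition Wsp :: "(nat \<Rightarrow> 'a::real_vector) \<Rightarrow> real set \<Rightarrow> 'a set" where
  "Wsp e F = spanF F (range e)"

definition coeffs :: "(nat \<Rightarrow> 'a::real_normed_vector) \<Rightarrow> 'a \<Rightarrow> nat \<Rightarrow> real" where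
  "coeffs e x = (THE a. (\<lambda>m. \<Sum>i<m. a i *\<^sub>R e i) \<longlonglongrightarrow> x)"

definition supp :: "(nat \<Rightarrow> 'a::real_normed_vector) \<Rightarrow> 'a \<Rightarrow> nat set" where
  "supp e x = {n. coeffs e x n \<noteq> 0}"

definition block_less :: "(nat \<Rightarrow> 'a::real_normed_vector) \<Rightarrow> 'a \<Rightarrow> 'a \<Rightarrow> bool" where
  "block_less e x y \<longleftrightarrow> Max (supp e x) < Min (supp e y)"

definition block_seq :: "(nat \<Rightarrow> 'a::real_normed_vector) \<Rightarrow> real set \<Rightarrow> (nat \<Rightarrow> 'a) \<Rightarrow> bool" where
  "block_seq e F x \<longleftrightarrow>
     (\<forall>n. x n \<in> Wsp e F \<and> x n \<noteq> 0 \<and> block_less e (x n) (x (Suc n)))"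

definition block_subspace :: "(nat \<Rightarrow> 'a::real_normed_vector) \<Rightarrow> real set \<Rightarrow> 'a set \<Rightarrow> bool" where
  "block_subspace e F X \<longleftrightarrow> (\<exists>x. block_seq e F x \<and> X = spanF F (range x))"

definition tail_space :: "(nat \<Rightarrow> 'a::real_vector) \<Rightarrow> real set \<Rightarrow> int \<Rightarrow> 'a set" where
  "tail_space e F n = spanF F (e ` {i. int i > n})"

definition fd_subspace :: "real set \<Rightarrow> ('a::real_vector) set \<Rightarrow> bool" where
  "fd_subspace F S \<longleftrightarrow> (\<exists>B. finite B \<and> S = spanF F B)"

definition equivK :: "real \<Rightarrow> 'a::real_normed_vector list \<Rightarrow> 'a list \<Rightarrow> bool" where
  "equivK K xs ys \<longleftrightarrow> length xs = length ys \<and>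
     (\<forall>a::nat \<Rightarrow> real.
        (1 / K) * norm (\<Sum>i<length xs. a i *\<^sub>R xs ! i) \<le> norm (\<Sum>i<length ys. a i *\<^sub>R ys ! i) \<and>
        norm (\<Sum>i<length ys. a i *\<^sub>R ys ! i) \<le> K * norm (\<Sum>i<length xs. a i *\<^sub>R xs ! i))"

text \<open>Ordinals are represented by well-orders (Main's BNF well-order library), compared by
  ordLess; the ordinal 0 is a well-order with empty field.  The ordinal product omega * alpha
  is the order type of alpha x omega ordered lexicographically with the alpha-coordinate major.\<close>

definition omega_times :: "'o rel \<Rightarrow> ('o \<times> nat) rel" where
  "omega_times \<alpha> = {((a, n), (b, m)). a \<in> Field \<alpha> \<and> b \<in> Field \<alpha> \<and>
       (((a, b) \<in> \<alpha> \<and> a \<noteq> b) \<or> (a = b \<and> n \<le> m))}"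

definition ord_zero :: "'o rel \<Rightarrow> bool" where
  "ord_zero \<xi> \<longleftrightarrow> Field \<xi> = {}"

text \<open>A move of player I is a pair (n, xi) of an integer and an ordinal; ordinals below gamma
  are represented as well-orders on the same carrier type as gamma (every ordinal below gamma is
  isomorphic to an initial segment of gamma).  legal_I gamma ms: the list ms of I's moves obeys
  the rules (xi_0 < gamma, xi_l < xi_(l-1), and the game has not ended before the last move).\<close>

definition legal_I :: "'o rel \<Rightarrow> (int \<times> 'o rel) list \<Rightarrow> bool" where
  "legal_I \<gamma> ms \<longleftrightarrow>
     (\<forall>l<length ms. Well_order (snd (ms ! l)) \<and>
        (if l = 0 then (snd (ms ! 0), \<gamma>) \<in> ordLess
         else (snd (ms ! l), snd (ms ! (l - 1))) \<in> ordLess)) \<and>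
     (\<forall>l. l + 1 < length ms \<longrightarrow> \<not> ord_zero (snd (ms ! l)))"

definition complete_I :: "'o rel \<Rightarrow> (int \<times> 'o rel) list \<Rightarrow> bool" where
  "complete_I \<gamma> ms \<longleftrightarrow> legal_I \<gamma> ms \<and>
     (if ms = [] then ord_zero \<gamma> else ord_zero (snd (last ms)))"

text \<open>A strategy for II maps the list of I's moves so far (l+1 moves) to II's answer (F_l, x_l).\<close>
type_synonym ('o, 'a) strategyII = "(int \<times> 'o rel) list \<Rightarrow> 'a set \<times> 'a"

definition legal_II_answer ::
  "(nat \<Rightarrow> 'a::real_normed_vector) \<Rightarrow> real set \<Rightarrow> 'a set \<Rightarrow> ('o, 'a) strategyII
     \<Rightarrow> (int \<times> 'o rel) list \<Rightarrow> bool" where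
  "legal_II_answer e F X \<sigma> ms \<longleftrightarrow>
     (let l = length ms - 1; Fs = (\<lambda>j. fst (\<sigma> (take (Suc j) ms))); x = snd (\<sigma> ms) in
        fd_subspace F (Fs l) \<and> Fs l \<subseteq> X \<inter> tail_space e F (fst (ms ! l)) \<and>
        x \<noteq> 0 \<and> (\<exists>f. (\<forall>j\<le>l. f j \<in> Fs j) \<and> x = (\<Sum>j\<le>l. f j)))"

definition strategy_II ::
  "(nat \<Rightarrow> 'a::real_normed_vector) \<Rightarrow> real set \<Rightarrow> 'a set \<Rightarrow> 'o rel \<Rightarrow> ('o, 'a) strategyII \<Rightarrow> bool" where
  "strategy_II e F X \<gamma> \<sigma> \<longleftrightarrow>
     (\<forall>ms. ms \<noteq> [] \<and> legal_I \<gamma> ms \<longrightarrow> legal_II_answer e F X \<sigma> ms)"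

definition outcome :: "('o, 'a) strategyII \<Rightarrow> (int \<times> 'o rel) list \<Rightarrow> 'a list" where
  "outcome \<sigma> ms = map (\<lambda>j. snd (\<sigma> (take (Suc j) ms))) [0..<length ms]"

definition II_wins ::
  "(nat \<Rightarrow> 'a::real_normed_vector) \<Rightarrow> real set \<Rightarrow> 'a set \<Rightarrow> 'o rel \<Rightarrow> ('a list \<Rightarrow> bool) \<Rightarrow> bool" where
  "II_wins e F X \<gamma> P \<longleftrightarrow>
     (\<exists>\<sigma>. strategy_II e F X \<gamma> \<sigma> \<and> (\<forall>ms. complete_I \<gamma> ms \<longrightarrow> P (outcome \<sigma> ms)))"

end

theory Submission
  imports Defs
begin

text \<open>II imitates her strategy \<open>\<sigma>\<close> for the game of length \<open>\<omega>\<cdot>\<alpha>\<close> inside the game of length \<open>\<alpha>\<close>.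
  Write \<open>z l = (\<Sum>i<M l. c l i *\<^sub>R y i)\<close>. An ordinal \<open>\<xi> < \<alpha>\<close> played by I is the order type of the
  initial segment of \<open>\<alpha>\<close> below some point \<open>p\<close>; the move \<open>(n, \<xi>)\<close> is fed to \<open>\<sigma>\<close> as a block of
  moves \<open>(n, \<omega>\<cdot>p + m)\<close> with \<open>m\<close> decreasing to \<open>0\<close>, the blocks being long enough that after
  \<open>l + 1\<close> of them \<open>\<sigma>\<close> has produced \<open>x i\<close> for all \<open>i < M l\<close>. II answers with the span of the
  subspaces \<open>\<sigma>\<close> played in the block and with \<open>v l = (\<Sum>i. c l i *\<^sub>R x i)\<close>. As \<open>x\<close> is
  \<open>K\<close>-equivalent to \<open>y\<close>, linear combinations of the \<open>v l\<close> and of the \<open>z l\<close> have norms within the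
  factor \<open>K\<close>; in particular \<open>v l \<noteq> 0\<close> since \<open>z l \<noteq> 0\<close>.\<close>

unbundle cardinal_syntax

section \<open>Finite \<open>F\<close>-linear spans\<close>

lemma spanF_I:
  fixes m :: nat
  assumes "x = (\<Sum>i<m. c i *\<^sub>R v i)" "\<forall>i<m. c i \<in> F \<and> v i \<in> S"
  shows "x \<in> spanF F S"
  unfolding spanF_def using assms by (intro CollectI exI[of _ m] exI[of _ c] exI[of _ v]) simp

lemma spanF_E:
  assumes "x \<in> spanF F S"
  obtains m :: nat and c v where "x = (\<Sum>i<m. c i *\<^sub>R v i)" "\<forall>i<m. c i \<in> F \<and> v i \<in> S"
  using assms unfolding spanF_def by auto

lemma spanF_zero: "0 \<in> spanF F S"
  by (rule spanF_I[where m=0]) auto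

lemma spanF_add:
  assumes "x \<in> spanF F S" "y \<in> spanF F S"
  shows "x + y \<in> spanF F S"
proof -
  obtain m :: nat and c v where x: "x = (\<Sum>i<m. c i *\<^sub>R v i)" "\<forall>i<m. c i \<in> F \<and> v i \<in> S"
    using assms(1) by (rule spanF_E)
  obtain n :: nat and d w where y: "y = (\<Sum>i<n. d i *\<^sub>R w i)" "\<forall>i<n. d i \<in> F \<and> w i \<in> S"
    using assms(2) by (rule spanF_E)
  define c' where "c' i = (if i < m then c i else d (i - m))" for i
  define v' where "v' i = (if i < m then v i else w (i - m))" for i
  have "(\<Sum>i<m+n. c' i *\<^sub>R v' i) = (\<Sum>i<m. c' i *\<^sub>R v' i) + (\<Sum>i<n. c' (m + i) *\<^sub>R v' (m + i))"
    by (induction n) (auto simp: add.assoc)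
  then have "x + y = (\<Sum>i<m+n. c' i *\<^sub>R v' i)"
    unfolding x y c'_def v'_def by simp
  moreover have "\<forall>i<m+n. c' i \<in> F \<and> v' i \<in> S"
    using x y unfolding c'_def v'_def by auto
  ultimately show ?thesis by (rule spanF_I)
qed

lemma spanF_sum:
  assumes "finite I" "\<And>i. i \<in> I \<Longrightarrow> f i \<in> spanF F S"
  shows "sum f I \<in> spanF F S"
  using assms by (induction I rule: finite_induct) (auto simp: spanF_zero spanF_add)

lemma spanF_scaleR:
  assumes "subfield_real F" "a \<in> F" "x \<in> spanF F S"
  shows "a *\<^sub>R x \<in> spanF F S"
proof -
  obtain m :: nat and c v where x: "x = (\<Sum>i<m. c i *\<^sub>R v i)" "\<forall>i<m. c i \<in> F \<and> v i \<in> S"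
    using assms(3) by (rule spanF_E)
  have "a *\<^sub>R x = (\<Sum>i<m. (a * c i) *\<^sub>R v i)"
    unfolding x by (simp add: scaleR_sum_right)
  moreover have "\<forall>i<m. a * c i \<in> F \<and> v i \<in> S"
    using x assms(1,2) unfolding subfield_real_def by auto
  ultimately show ?thesis by (rule spanF_I)
qed

lemma spanF_superset:
  assumes "subfield_real F" "v \<in> S"
  shows "v \<in> spanF F S"
  by (rule spanF_I[where m=1 and c="\<lambda>_. 1" and v="\<lambda>_. v"])
    (use assms in \<open>auto simp: subfield_real_def\<close>)

lemma spanF_mono: "S \<subseteq> T \<Longrightarrow> spanF F S \<subseteq> spanF F T"
  unfolding spanF_def by blast

lemma spanF_subset_spanF:
  assumes "subfield_real F" "S \<subseteq> spanF F T"
  shows "spanF F S \<subseteq> spanF F T"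
proof
  fix x assume "x \<in> spanF F S"
  then obtain m :: nat and c v where x: "x = (\<Sum>i<m. c i *\<^sub>R v i)" "\<forall>i<m. c i \<in> F \<and> v i \<in> S"
    by (rule spanF_E)
  show "x \<in> spanF F T"
    unfolding x by (rule spanF_sum) (use x assms in \<open>auto intro: spanF_scaleR\<close>)
qed

lemma fd_subspace_spanF_UN:
  assumes "subfield_real F" "finite I" "\<And>i. i \<in> I \<Longrightarrow> fd_subspace F (U i)"
  shows "fd_subspace F (spanF F (\<Union>i\<in>I. U i))"
proof -
  obtain B where B: "\<And>i. i \<in> I \<Longrightarrow> finite (B i) \<and> U i = spanF F (B i)"
    using assms(3) unfolding fd_subspace_def by metis
  have "U i \<subseteq> spanF F (\<Union>i\<in>I. B i)" if "i \<in> I" for i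
    using B[OF that] spanF_mono[of "B i" "\<Union>i\<in>I. B i" F] that by blast
  then have "spanF F (\<Union>i\<in>I. U i) \<subseteq> spanF F (\<Union>i\<in>I. B i)"
    by (intro spanF_subset_spanF[OF assms(1)]) blast
  moreover have "(\<Union>i\<in>I. B i) \<subseteq> (\<Union>i\<in>I. U i)"
    using B spanF_superset[OF assms(1)] by blast
  then have "spanF F (\<Union>i\<in>I. B i) \<subseteq> spanF F (\<Union>i\<in>I. U i)"
    by (rule spanF_mono)
  moreover have "finite (\<Union>i\<in>I. B i)"
    using B assms(2) by blast
  ultimately show ?thesis
    unfolding fd_subspace_def by blast
qed

lemma subfield_real_sum:
  assumes "subfield_real F" "finite I" "\<And>i. i \<in> I \<Longrightarrow> f i \<in> F"
  shows "sum f I \<in> F"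
  using assms(2,3) by (induction I rule: finite_induct) (use assms(1) in \<open>auto simp: subfield_real_def\<close>)

lemma spanF_range_expansion:
  fixes y :: "nat \<Rightarrow> 'a::real_vector"
  assumes "subfield_real F" "x \<in> spanF F (range y)"
  shows "\<exists>c M. (\<forall>i. c i \<in> F) \<and> (\<forall>i\<ge>M. c i = 0) \<and> x = (\<Sum>i<M. c i *\<^sub>R y i)"
proof -
  obtain m :: nat and a v where x: "x = (\<Sum>k<m. a k *\<^sub>R v k)" "\<forall>k<m. a k \<in> F \<and> v k \<in> range y"
    using assms(2) by (rule spanF_E)
  define p where "p k = inv y (v k)" for k
  have p: "v k = y (p k)" if "k < m" for k
    using x(2) that unfolding p_def by (simp add: f_inv_into_f)
  define c where "c i = (\<Sum>k\<in>{k\<in>{..<m}. p k = i}. a k)" for i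
  define M where "M = Suc (Max (p ` {..<m}))"
  have pM: "p k < M" if "k < m" for k
    unfolding M_def using that by (simp add: le_imp_less_Suc)
  have "\<forall>i. c i \<in> F"
    unfolding c_def using x(2) by (auto intro!: subfield_real_sum assms(1))
  moreover have "\<forall>i\<ge>M. c i = 0"
  proof (intro allI impI)
    fix i assume "M \<le> i"
    then have "{k\<in>{..<m}. p k = i} = {}"
      using pM by fastforce
    then show "c i = 0"
      unfolding c_def by (simp only: sum.empty)
  qed
  moreover have "(\<Sum>i<M. c i *\<^sub>R y i) = x"
  proof -
    have "(\<Sum>i<M. c i *\<^sub>R y i) = (\<Sum>i<M. \<Sum>k\<in>{k\<in>{..<m}. p k = i}. a k *\<^sub>R y (p k))"
      unfolding c_def scaleR_sum_left by (intro sum.cong) auto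
    also have "\<dots> = (\<Sum>k<m. a k *\<^sub>R y (p k))"
      using pM by (intro sum.group) auto
    finally show ?thesis
      unfolding x(1) using p by simp
  qed
  ultimately show ?thesis by metis
qed

lemma equivK_combinations:
  assumes xy: "equivK K xs ys" and len: "length us = length vs"
    and us: "\<And>l. l < length us \<Longrightarrow> us ! l = (\<Sum>i<length xs. c l i *\<^sub>R xs ! i)"
    and vs: "\<And>l. l < length vs \<Longrightarrow> vs ! l = (\<Sum>i<length ys. c l i *\<^sub>R ys ! i)"
  shows "equivK K us vs"
proof -
  have combine: "(\<Sum>l<L. b l *\<^sub>R (\<Sum>i<N. c l i *\<^sub>R w i)) = (\<Sum>i<N. (\<Sum>l<L. b l * c l i) *\<^sub>R w i)"
    for b :: "nat \<Rightarrow> real" and w :: "nat \<Rightarrow> 'a" and L N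
    by (simp add: scaleR_sum_right scaleR_sum_left sum.swap[of _ "{..<L}"])
  have sums: "(\<Sum>l<length us. b l *\<^sub>R us ! l) = (\<Sum>i<length xs. (\<Sum>l<length us. b l * c l i) *\<^sub>R xs ! i)"
    "(\<Sum>l<length vs. b l *\<^sub>R vs ! l) = (\<Sum>i<length ys. (\<Sum>l<length us. b l * c l i) *\<^sub>R ys ! i)"
    for b
    using us vs len by (simp_all add: combine[symmetric])
  have "1 / K * norm (\<Sum>l<length us. b l *\<^sub>R us ! l) \<le> norm (\<Sum>l<length vs. b l *\<^sub>R vs ! l) \<and>
    norm (\<Sum>l<length vs. b l *\<^sub>R vs ! l) \<le> K * norm (\<Sum>l<length us. b l *\<^sub>R us ! l)" for b
    unfolding sums by (rule conjunct2[OF xy[unfolded equivK_def], rule_format])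
  then show ?thesis
    using len unfolding equivK_def by blast
qed

lemma equivK_nth_nonzero:
  assumes "equivK K xs ys" "l < length ys" "ys ! l \<noteq> 0"
  shows "xs ! l \<noteq> 0"
proof
  assume "xs ! l = 0"
  define a where "a i = (if i = l then 1 else 0 :: real)" for i
  have "(\<Sum>i<length ws. a i *\<^sub>R ws ! i) = ws ! l" if "l < length ws" for ws :: "'a list"
  proof -
    have "(\<Sum>i<length ws. a i *\<^sub>R ws ! i) = (\<Sum>i<length ws. if i = l then ws ! l else 0)"
      by (rule sum.cong) (auto simp: a_def)
    then show ?thesis
      using that by simp
  qed
  then have "norm (ys ! l) \<le> K * norm (xs ! l)"
    using assms(1,2) unfolding equivK_def by metis
  with \<open>xs ! l = 0\<close> \<open>ys ! l \<noteq> 0\<close> show False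
    by simp
qed

section \<open>Initial segments of well-orders\<close>

definition init_seg :: "'a rel \<Rightarrow> 'a \<Rightarrow> 'a rel" where
  "init_seg r a = Restr r (underS r a)"

lemma Well_order_init_seg: "Well_order r \<Longrightarrow> Well_order (init_seg r a)"
  unfolding init_seg_def by (rule Well_order_Restr)

lemma init_seg_ordLess:
  assumes "Well_order r" "a \<in> Field r"
  shows "init_seg r a <o r"
  unfolding init_seg_def using assms underS_Restr_ordLess by fastforce

lemma init_seg_ordLess_init_seg:
  assumes r: "Well_order r" and ab: "(a, b) \<in> r" "a \<noteq> b"
  shows "init_seg r a <o init_seg r b"
proof -
  have ofilters: "wo_rel.ofilter r (underS r a)" "wo_rel.ofilter r (underS r b)"
    using r by (simp_all add: wo_rel_def wo_rel.underS_ofilter)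
  have "underS r a \<subseteq> underS r b"
    using ab r wo_rel.TRANS[of r] wo_rel.ANTISYM[of r]
    unfolding wo_rel_def underS_def trans_def antisym_def by blast
  moreover have "a \<in> underS r b" "a \<notin> underS r a"
    using ab by (auto simp: underS_def)
  ultimately show ?thesis
    unfolding init_seg_def using ofilter_subset_ordLess[OF r ofilters] by blast
qed

lemma Field_init_seg:
  assumes "Well_order r"
  shows "Field (init_seg r a) = underS r a"
  unfolding init_seg_def using assms
  by (intro Field_Restr_ofilter) (simp_all add: wo_rel_def wo_rel.underS_ofilter)

lemma ord_zero_init_seg: "Well_order r \<Longrightarrow> ord_zero (init_seg r a) \<longleftrightarrow> underS r a = {}"
  by (simp add: ord_zero_def Field_init_seg)

lemma ord_zero_ordIso: "r =o r' \<Longrightarrow> ord_zero r \<longleftrightarrow> ord_zero r'"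
  unfolding ordIso_def iso_def bij_betw_def ord_zero_def by auto

lemma empty_ordLess:
  fixes r :: "'a rel"
  assumes "Well_order r" "\<not> ord_zero r"
  shows "({} :: 'a rel) <o r"
proof -
  have "wo_rel.ofilter r {}"
    unfolding Order_Relation.ofilter_def by simp
  then have "Restr r {} <o r"
    using ofilter_ordLess[OF assms(1)] assms(2) unfolding ord_zero_def by blast
  then show ?thesis
    by simp
qed

definition ord_point :: "'o rel \<Rightarrow> 'o rel \<Rightarrow> 'o" where
  "ord_point \<alpha> \<xi> = (SOME p. p \<in> Field \<alpha> \<and> \<xi> =o init_seg \<alpha> p)"

lemma ord_point:
  assumes "Well_order \<alpha>" "\<xi> <o \<alpha>"
  shows "ord_point \<alpha> \<xi> \<in> Field \<alpha>" "\<xi> =o init_seg \<alpha> (ord_point \<alpha> \<xi>)"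
proof -
  have "\<exists>p. p \<in> Field \<alpha> \<and> \<xi> =o init_seg \<alpha> p"
    using assms ordLess_iff_ordIso_Restr[OF assms(1), of \<xi>]
    unfolding init_seg_def ordLess_def by blast
  then have "ord_point \<alpha> \<xi> \<in> Field \<alpha> \<and> \<xi> =o init_seg \<alpha> (ord_point \<alpha> \<xi>)"
    unfolding ord_point_def by (rule someI_ex)
  then show "ord_point \<alpha> \<xi> \<in> Field \<alpha>" "\<xi> =o init_seg \<alpha> (ord_point \<alpha> \<xi>)"
    by auto
qed

lemma ord_zero_iff_ord_point:
  assumes "Well_order \<alpha>" "\<xi> <o \<alpha>"
  shows "ord_zero \<xi> \<longleftrightarrow> underS \<alpha> (ord_point \<alpha> \<xi>) = {}"
proof -
  have "ord_zero \<xi> \<longleftrightarrow> ord_zero (init_seg \<alpha> (ord_point \<alpha> \<xi>))"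
    by (rule ord_zero_ordIso[OF ord_point(2)[OF assms]])
  also have "\<dots> \<longleftrightarrow> underS \<alpha> (ord_point \<alpha> \<xi>) = {}"
    by (rule ord_zero_init_seg[OF assms(1)])
  finally show ?thesis .
qed

lemma ord_point_strict_mono:
  assumes \<alpha>: "Well_order \<alpha>" and "\<xi>' <o \<xi>" "\<xi> <o \<alpha>"
  shows "(ord_point \<alpha> \<xi>', ord_point \<alpha> \<xi>) \<in> \<alpha>" "ord_point \<alpha> \<xi>' \<noteq> ord_point \<alpha> \<xi>"
proof -
  let ?p = "ord_point \<alpha> \<xi>" and ?q = "ord_point \<alpha> \<xi>'"
  have \<xi>': "\<xi>' <o \<alpha>"
    using assms ordLess_transitive by blast
  have "init_seg \<alpha> ?q <o init_seg \<alpha> ?p"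
    using ordIso_ordLess_trans[OF ordIso_symmetric[OF ord_point(2)[OF \<alpha> \<xi>']]]
      ordLess_ordIso_trans ord_point(2)[OF \<alpha> assms(3)] assms(2) by blast
  moreover have "wo_rel.ofilter \<alpha> (underS \<alpha> ?q)" "wo_rel.ofilter \<alpha> (underS \<alpha> ?p)"
    using \<alpha> by (simp_all add: wo_rel_def wo_rel.underS_ofilter)
  ultimately have less: "underS \<alpha> ?q \<subset> underS \<alpha> ?p"
    unfolding init_seg_def using ofilter_subset_ordLess[OF \<alpha>] by blast
  then show "?q \<noteq> ?p"
    by auto
  moreover have "?p \<notin> underS \<alpha> ?q"
    using less underS_notIn[of ?p \<alpha>] by blast
  moreover have "(?q, ?p) \<in> \<alpha> \<or> (?p, ?q) \<in> \<alpha>"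
    using wo_rel.TOTALS[of \<alpha>] ord_point(1)[OF \<alpha> \<xi>'] ord_point(1)[OF \<alpha> assms(3)] \<alpha>
    unfolding wo_rel_def by blast
  ultimately show "(?q, ?p) \<in> \<alpha>"
    unfolding underS_def by auto
qed

section \<open>The order \<open>\<omega>\<cdot>\<alpha>\<close>\<close>

lemma Field_omega_times: "Field (omega_times \<alpha>) = Field \<alpha> \<times> UNIV"
proof
  show "Field (omega_times \<alpha>) \<subseteq> Field \<alpha> \<times> UNIV"
    unfolding omega_times_def Field_def by auto
  show "Field \<alpha> \<times> UNIV \<subseteq> Field (omega_times \<alpha>)"
  proof
    fix x assume "x \<in> Field \<alpha> \<times> (UNIV :: nat set)"
    then have "(x, x) \<in> omega_times \<alpha>"
      unfolding omega_times_def by auto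
    then show "x \<in> Field (omega_times \<alpha>)"
      by (rule FieldI1)
  qed
qed

lemma Well_order_omega_times:
  assumes \<alpha>: "Well_order \<alpha>"
  shows "Well_order (omega_times \<alpha>)"
proof -
  let ?W = "omega_times \<alpha>"
  have trans: "trans \<alpha>" and antisym: "antisym \<alpha>" and wf: "wf (\<alpha> - Id)"
    and total: "\<forall>a\<in>Field \<alpha>. \<forall>b\<in>Field \<alpha>. (a, b) \<in> \<alpha> \<or> (b, a) \<in> \<alpha>"
    using \<alpha> by (simp_all add: wo_rel_def wo_rel.TRANS wo_rel.ANTISYM wo_rel.WF wo_rel.TOTALS)
  have "refl_on (Field ?W) ?W"
    unfolding refl_on_def Field_omega_times by (auto simp: omega_times_def)
  moreover have "trans ?W"
  proof (rule transI)
    fix x y z assume "(x, y) \<in> ?W" "(y, z) \<in> ?W"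
    moreover obtain a n b m c k where "x = (a, n)" "y = (b, m)" "z = (c, k)"
      by (metis surj_pair)
    ultimately have ab: "a \<in> Field \<alpha>" "b \<in> Field \<alpha>" "((a, b) \<in> \<alpha> \<and> a \<noteq> b) \<or> (a = b \<and> n \<le> m)"
      and bc: "c \<in> Field \<alpha>" "((b, c) \<in> \<alpha> \<and> b \<noteq> c) \<or> (b = c \<and> m \<le> k)"
      and xz: "x = (a, n)" "z = (c, k)"
      unfolding omega_times_def by auto
    have "(a, b) \<in> \<alpha> \<Longrightarrow> a \<noteq> b \<Longrightarrow> (b, c) \<in> \<alpha> \<Longrightarrow> (a, c) \<in> \<alpha> \<and> a \<noteq> c"
      using trans antisym by (meson antisymD transD)
    with ab(3) bc(2) have "((a, c) \<in> \<alpha> \<and> a \<noteq> c) \<or> (a = c \<and> n \<le> k)"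
      by auto
    then show "(x, z) \<in> ?W"
      unfolding xz omega_times_def using ab bc by auto
  qed
  moreover have "antisym ?W"
    unfolding antisym_def omega_times_def using antisym by (auto dest: antisymD)
  moreover have "total_on (Field ?W) ?W"
    unfolding total_on_def Field_omega_times
  proof (intro ballI impI)
    fix x y assume "x \<in> Field \<alpha> \<times> (UNIV :: nat set)" "y \<in> Field \<alpha> \<times> (UNIV :: nat set)"
    then show "(x, y) \<in> ?W \<or> (y, x) \<in> ?W"
      using total unfolding omega_times_def by (cases x, cases y) auto
  qed
  moreover have "?W - Id \<subseteq> (\<alpha> - Id) <*lex*> less_than"
    unfolding omega_times_def lex_prod_def by auto
  then have "wf (?W - Id)"
    by (rule wf_subset[rotated]) (use wf in auto)
  ultimately show ?thesis
    unfolding well_order_on_def linear_order_on_def partial_order_on_def preorder_on_def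
    by (auto intro: FieldI1 FieldI2)
qed

lemma underS_omega_times_empty_iff:
  assumes "p \<in> Field \<alpha>"
  shows "underS (omega_times \<alpha>) (p, m) = {} \<longleftrightarrow> m = 0 \<and> underS \<alpha> p = {}"
proof
  assume empty: "underS (omega_times \<alpha>) (p, m) = {}"
  have "m = 0"
  proof (rule ccontr)
    assume "m \<noteq> 0"
    then have "(p, 0) \<in> underS (omega_times \<alpha>) (p, m)"
      using assms unfolding underS_def omega_times_def by auto
    with empty show False by auto
  qed
  moreover have "underS \<alpha> p = {}"
  proof (rule ccontr)
    assume "underS \<alpha> p \<noteq> {}"
    then obtain q where q: "q \<noteq> p" "(q, p) \<in> \<alpha>"
      unfolding underS_def by auto
    then have "(q, 0) \<in> underS (omega_times \<alpha>) (p, m)"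
      using assms unfolding underS_def omega_times_def by (auto intro: FieldI1)
    with empty show False by auto
  qed
  ultimately show "m = 0 \<and> underS \<alpha> p = {}" ..
next
  assume "m = 0 \<and> underS \<alpha> p = {}"
  then show "underS (omega_times \<alpha>) (p, m) = {}"
    unfolding underS_def omega_times_def by auto
qed

section \<open>Partitioning \<open>\<nat>\<close> into blocks\<close>

fun block_start :: "(nat \<Rightarrow> nat) \<Rightarrow> nat \<Rightarrow> nat" where
  "block_start M 0 = 0"
| "block_start M (Suc l) = max (Suc (block_start M l)) (M l)"

definition block_index :: "(nat \<Rightarrow> nat) \<Rightarrow> nat \<Rightarrow> nat" where
  "block_index M t = (LEAST j. t < block_start M (Suc j))"

lemma strict_mono_block_start: "strict_mono (block_start M)"
  by (rule strict_monoI_Suc) simp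

lemma block_start_mono: "i \<le> j \<Longrightarrow> block_start M i \<le> block_start M j"
  using strict_mono_block_start strict_mono_less_eq by blast

lemma le_block_start: "l \<le> block_start M l"
  by (induction l) auto

lemma block_start_ge: "M l \<le> block_start M (Suc l)"
  by simp

declare block_start.simps(2)[simp del]

lemma block_index_bounds:
  "block_start M (block_index M t) \<le> t" "t < block_start M (Suc (block_index M t))"
proof -
  have "t < block_start M (Suc t)"
    using le_block_start[of "Suc t" M] by simp
  then show "t < block_start M (Suc (block_index M t))"
    unfolding block_index_def by (rule LeastI)
  show "block_start M (block_index M t) \<le> t"
  proof (cases "block_index M t")
    case (Suc j)
    then have "j < block_index M t"
      by simp
    then have "\<not> t < block_start M (Suc j)"
      unfolding block_index_def by (rule not_less_Least)
    then show ?thesis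
      using Suc by simp
  qed simp
qed

lemma block_index_eqI:
  assumes "block_start M j \<le> t" "t < block_start M (Suc j)"
  shows "block_index M t = j"
proof (rule linorder_cases[of "block_index M t" j])
  assume "block_index M t < j"
  then have "block_start M (Suc (block_index M t)) \<le> block_start M j"
    by (intro block_start_mono) simp
  with assms block_index_bounds(2)[of t M] show ?thesis
    by simp
next
  assume "j < block_index M t"
  then have "block_start M (Suc j) \<le> block_start M (block_index M t)"
    by (intro block_start_mono) simp
  with assms block_index_bounds(1)[of M t] show ?thesis
    by simp
qed

lemma block_index_less:
  assumes "t < block_start M L"
  shows "block_index M t < L"
  using assms block_index_bounds(1)[of M t] block_start_mono[of L "block_index M t" M] by linarith

lemma sum_blocks:
  "(\<Sum>j<L. \<Sum>t\<in>{block_start M j..<block_start M (Suc j)}. h t) = (\<Sum>t<block_start M L. h t)"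
proof (induction L)
  case (Suc L)
  have "(\<Sum>t<block_start M L. h t) + (\<Sum>t\<in>{block_start M L..<block_start M (Suc L)}. h t)
      = (\<Sum>t<block_start M (Suc L). h t)"
    using sum.atLeastLessThan_concat[of 0 "block_start M L" "block_start M (Suc L)" h]
      block_start_mono[of L "Suc L" M]
    by (simp add: atLeast0LessThan)
  with Suc show ?case
    by simp
qed simp

lemma legal_I_take: "legal_I \<gamma> ms \<Longrightarrow> legal_I \<gamma> (take n ms)"
  unfolding legal_I_def by auto

lemma legal_I_ordLess:
  assumes "legal_I \<gamma> ms" "l < length ms"
  shows "snd (ms ! l) <o \<gamma>"
  using assms(2)
proof (induction l)
  case (Suc l)
  then have "snd (ms ! Suc l) <o snd (ms ! l)"
    using assms(1) unfolding legal_I_def by (metis Suc_neq_Zero diff_Suc_1)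
  with Suc show ?case
    using ordLess_transitive by auto
qed (use assms(1) in \<open>auto simp: legal_I_def\<close>)

text \<open>Complete the play by letting I play the ordinal 0 next.\<close>
lemma legal_I_completion:
  fixes \<gamma> :: "'o rel"
  assumes legal: "legal_I \<gamma> ms" and "ms \<noteq> []"
  shows "\<exists>ms'. complete_I \<gamma> ms' \<and> take (length ms) ms' = ms"
proof (cases "ord_zero (snd (last ms))")
  case True
  with assms show ?thesis
    unfolding complete_I_def by (intro exI[of _ ms]) simp
next
  case False
  let ?L = "length ms" and ?\<xi> = "snd (last ms)"
  define ms' where "ms' = ms @ [(0, {})]"
  have last: "?\<xi> = snd (ms ! (?L - 1))"
    using \<open>ms \<noteq> []\<close> by (simp add: last_conv_nth)
  have "Well_order ?\<xi>"
    using legal \<open>ms \<noteq> []\<close> unfolding legal_I_def last by simp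
  then have less: "({} :: 'o rel) <o ?\<xi>"
    using False by (rule empty_ordLess)
  have "legal_I \<gamma> ms'"
    unfolding legal_I_def
  proof (rule conjI; intro allI impI)
    fix l assume l: "l < length ms'"
    show "Well_order (snd (ms' ! l)) \<and>
          (if l = 0 then snd (ms' ! 0) <o \<gamma> else snd (ms' ! l) <o snd (ms' ! (l - 1)))"
    proof (cases "l < ?L")
      case True
      then show ?thesis
        using legal unfolding legal_I_def ms'_def by (auto simp: nth_append)
    next
      case False
      then have "l = ?L"
        using l unfolding ms'_def by simp
      then show ?thesis
        using \<open>ms \<noteq> []\<close> less last unfolding ms'_def ordLess_def by (simp add: nth_append)
    qed
  next
    fix l assume "l + 1 < length ms'"
    then consider "l + 1 < ?L" | "l = ?L - 1"
      unfolding ms'_def by fastforce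
    then show "\<not> ord_zero (snd (ms' ! l))"
      using legal False last \<open>ms \<noteq> []\<close> unfolding legal_I_def ms'_def
      by cases (auto simp: nth_append)
  qed
  moreover have "ord_zero (snd (last ms'))"
    unfolding ms'_def ord_zero_def by simp
  ultimately show ?thesis
    unfolding complete_I_def ms'_def by (intro exI[of _ "ms @ [(0, {})]"]) simp
qed

section \<open>Simulating the game of length \<open>\<omega>\<cdot>\<alpha>\<close>\<close>

locale strategy_transfer =
  fixes e :: "nat \<Rightarrow> 'a::real_normed_vector" and F :: "real set" and X :: "'a set"
    and \<alpha> :: "'o rel" and \<sigma> :: "('o \<times> nat, 'a) strategyII"
    and y z :: "nat \<Rightarrow> 'a" and c :: "nat \<Rightarrow> nat \<Rightarrow> real" and M :: "nat \<Rightarrow> nat" and K :: real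
  assumes subfield: "subfield_real F"
    and X_spanF: "\<exists>S. X = spanF F S"
    and Well_order_\<alpha>: "Well_order \<alpha>"
    and \<sigma>_strategy: "strategy_II e F X (omega_times \<alpha>) \<sigma>"
    and \<sigma>_wins: "\<And>ms. complete_I (omega_times \<alpha>) ms \<Longrightarrow> equivK K (outcome \<sigma> ms) (map y [0..<length ms])"
    and c_in_F: "\<And>l i. c l i \<in> F"
    and c_vanishes: "\<And>l i. M l \<le> i \<Longrightarrow> c l i = 0"
    and z_expansion: "\<And>l. z l = (\<Sum>i<M l. c l i *\<^sub>R y i)"
    and z_nonzero: "\<And>l. z l \<noteq> 0"
begin

abbreviation "W \<equiv> omega_times \<alpha>"
abbreviation "start \<equiv> block_start M"
abbreviation "blk \<equiv> block_index M"

text \<open>The pair \<open>(p, m)\<close> of \<open>omega_times \<alpha>\<close> stands for the ordinal \<open>\<omega>\<cdot>p + m\<close>; along a block of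
  the simulated play, \<open>m\<close> counts down to \<open>0\<close>.\<close>
definition sim_pos :: "(int \<times> 'o rel) list \<Rightarrow> nat \<Rightarrow> 'o \<times> nat" where
  "sim_pos ms t = (ord_point \<alpha> (snd (ms ! blk t)), start (Suc (blk t)) - Suc t)"

definition sim_play :: "(int \<times> 'o rel) list \<Rightarrow> (int \<times> ('o \<times> nat) rel) list" where
  "sim_play ms = map (\<lambda>t. (fst (ms ! blk t), init_seg W (sim_pos ms t))) [0..<start (length ms)]"

definition \<sigma>_space :: "(int \<times> 'o rel) list \<Rightarrow> nat \<Rightarrow> 'a set" where
  "\<sigma>_space ms t = fst (\<sigma> (take (Suc t) (sim_play ms)))"

definition \<sigma>_vector :: "(int \<times> 'o rel) list \<Rightarrow> nat \<Rightarrow> 'a" where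
  "\<sigma>_vector ms t = snd (\<sigma> (take (Suc t) (sim_play ms)))"

definition \<tau> :: "('o, 'a) strategyII" where
  "\<tau> ms = (spanF F (\<Union>t\<in>{start (length ms - 1)..<start (length ms)}. \<sigma>_space ms t),
           \<Sum>i<start (length ms). c (length ms - 1) i *\<^sub>R \<sigma>_vector ms i)"

lemma length_sim_play [simp]: "length (sim_play ms) = start (length ms)"
  unfolding sim_play_def by simp

lemma take_sim_play:
  assumes "j < length ms"
  shows "sim_play (take (Suc j) ms) = take (start (Suc j)) (sim_play ms)"
proof (rule nth_equalityI)
  have le: "start (Suc j) \<le> start (length ms)"
    using assms by (intro block_start_mono) simp
  then show "length (sim_play (take (Suc j) ms)) = length (take (start (Suc j)) (sim_play ms))"
    using assms by (simp add: min_absorb1)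
  fix t assume "t < length (sim_play (take (Suc j) ms))"
  then have t: "t < start (Suc j)"
    using assms by (simp add: min_absorb1)
  then have "blk t < Suc j"
    by (rule block_index_less)
  then show "sim_play (take (Suc j) ms) ! t = take (start (Suc j)) (sim_play ms) ! t"
    using t le assms by (simp add: sim_play_def sim_pos_def min_absorb1)
qed

lemma
  assumes "j < length ms" "t < start (Suc j)"
  shows \<sigma>_space_take: "\<sigma>_space (take (Suc j) ms) t = \<sigma>_space ms t"
    and \<sigma>_vector_take: "\<sigma>_vector (take (Suc j) ms) t = \<sigma>_vector ms t"
  using assms by (simp_all add: \<sigma>_space_def \<sigma>_vector_def take_sim_play min_absorb2)

lemma \<tau>_take:
  assumes "l < length ms"
  shows "\<tau> (take (Suc l) ms) = (spanF F (\<Union>t\<in>{start l..<start (Suc l)}. \<sigma>_space ms t),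
                                \<Sum>i<start (Suc l). c l i *\<^sub>R \<sigma>_vector ms i)"
  using assms \<sigma>_space_take[OF assms] \<sigma>_vector_take[OF assms] by (simp add: \<tau>_def)

lemma ord_point_move_in_Field:
  assumes "legal_I \<alpha> ms" "j < length ms"
  shows "ord_point \<alpha> (snd (ms ! j)) \<in> Field \<alpha>"
  using ord_point(1)[OF Well_order_\<alpha> legal_I_ordLess[OF assms]] .

lemma sim_pos_in_Field:
  assumes "legal_I \<alpha> ms" "t < start (length ms)"
  shows "sim_pos ms t \<in> Field W"
  using ord_point_move_in_Field[OF assms(1) block_index_less[OF assms(2)]]
  unfolding sim_pos_def Field_omega_times by simp

lemma sim_pos_decreasing:
  assumes legal: "legal_I \<alpha> ms" and t: "Suc t < start (length ms)"
  shows "(sim_pos ms (Suc t), sim_pos ms t) \<in> W" "sim_pos ms (Suc t) \<noteq> sim_pos ms t"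
proof -
  define j where "j = blk t"
  have j: "start j \<le> t" "t < start (Suc j)"
    unfolding j_def by (rule block_index_bounds)+
  have "j < length ms"
    unfolding j_def using t by (intro block_index_less) simp
  have "(sim_pos ms (Suc t), sim_pos ms t) \<in> W \<and> sim_pos ms (Suc t) \<noteq> sim_pos ms t"
  proof (cases "Suc t < start (Suc j)")
    case True
    then have "blk (Suc t) = j"
      using j by (intro block_index_eqI) simp_all
    then show ?thesis
      using True ord_point_move_in_Field[OF legal \<open>j < length ms\<close>]
      unfolding sim_pos_def j_def omega_times_def by auto
  next
    case False
    then have next_block: "Suc t = start (Suc j)"
      using j by simp
    then have "blk (Suc t) = Suc j"
      using strict_mono_block_start[of M] by (intro block_index_eqI) (simp_all add: strict_mono_def)
    moreover have "Suc j < length ms"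
      using t next_block strict_mono_less[OF strict_mono_block_start[of M], of "Suc j" "length ms"] by simp
    moreover have "snd (ms ! Suc j) <o snd (ms ! j)"
      using legal \<open>Suc j < length ms\<close> unfolding legal_I_def by (metis Suc_neq_Zero diff_Suc_1)
    ultimately show ?thesis
      using ord_point_strict_mono[OF Well_order_\<alpha> _ legal_I_ordLess[OF legal \<open>j < length ms\<close>]]
        ord_point_move_in_Field[OF legal] \<open>j < length ms\<close>
      unfolding sim_pos_def j_def omega_times_def by auto
  qed
  then show "(sim_pos ms (Suc t), sim_pos ms t) \<in> W" "sim_pos ms (Suc t) \<noteq> sim_pos ms t"
    by auto
qed

lemma underS_sim_pos_empty_iff:
  assumes legal: "legal_I \<alpha> ms" and t: "t < start (length ms)"
  shows "underS W (sim_pos ms t) = {} \<longleftrightarrow> Suc t = start (length ms) \<and> ord_zero (snd (last ms))"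
proof -
  define j where "j = blk t"
  have "j < length ms"
    unfolding j_def using t by (rule block_index_less)
  have j: "start j \<le> t" "t < start (Suc j)"
    unfolding j_def by (rule block_index_bounds)+
  have "underS W (sim_pos ms t) = {} \<longleftrightarrow> Suc t = start (Suc j) \<and> ord_zero (snd (ms ! j))"
    using j underS_omega_times_empty_iff[OF ord_point_move_in_Field[OF legal \<open>j < length ms\<close>]]
      ord_zero_iff_ord_point[OF Well_order_\<alpha> legal_I_ordLess[OF legal \<open>j < length ms\<close>]]
    unfolding sim_pos_def j_def by auto
  also have "\<dots> \<longleftrightarrow> Suc t = start (length ms) \<and> ord_zero (snd (last ms))"
  proof -
    have last: "last ms = ms ! j" if "Suc j = length ms"
      using last_conv_nth[of ms] that[symmetric] by fastforce
    have "Suc j = length ms" if "ord_zero (snd (ms ! j))"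
      using legal that \<open>j < length ms\<close> unfolding legal_I_def by (metis Suc_eq_plus1 Suc_lessI)
    moreover have "Suc j = length ms" if "Suc t = start (length ms)"
    proof -
      have "start (length ms) \<le> start (Suc j)"
        using that j(2) by simp
      then have "length ms \<le> Suc j"
        using strict_mono_less_eq[OF strict_mono_block_start[of M]] by blast
      with \<open>j < length ms\<close> show ?thesis
        by simp
    qed
    ultimately show ?thesis
      using last by auto
  qed
  finally show ?thesis .
qed

lemma legal_sim_play:
  assumes legal: "legal_I \<alpha> ms"
  shows "legal_I W (sim_play ms)"
  unfolding legal_I_def
proof (rule conjI; intro allI impI)
  have WO: "Well_order W"
    using Well_order_\<alpha> by (rule Well_order_omega_times)
  fix t assume "t < length (sim_play ms)"
  then have t: "t < start (length ms)"
    by simp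
  have snd_sim_play: "snd (sim_play ms ! i) = init_seg W (sim_pos ms i)" if "i < start (length ms)" for i
    using that unfolding sim_play_def by simp
  show "Well_order (snd (sim_play ms ! t)) \<and>
     (if t = 0 then snd (sim_play ms ! 0) <o W else snd (sim_play ms ! t) <o snd (sim_play ms ! (t - 1)))"
  proof (cases t)
    case 0
    then show ?thesis
      using t snd_sim_play init_seg_ordLess[OF WO sim_pos_in_Field[OF legal t]] Well_order_init_seg[OF WO]
      by simp
  next
    case (Suc s)
    then show ?thesis
      using t snd_sim_play sim_pos_decreasing[OF legal, of s] Well_order_init_seg[OF WO]
        init_seg_ordLess_init_seg[OF WO]
      by simp
  qed
next
  fix t assume "t + 1 < length (sim_play ms)"
  then show "\<not> ord_zero (snd (sim_play ms ! t))"
    using underS_sim_pos_empty_iff[OF legal, of t]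
      ord_zero_init_seg[OF Well_order_omega_times[OF Well_order_\<alpha>]]
    unfolding sim_play_def by simp
qed

lemma complete_sim_play:
  assumes "complete_I \<alpha> ms" "ms \<noteq> []"
  shows "complete_I W (sim_play ms)"
proof -
  have legal: "legal_I \<alpha> ms" and zero: "ord_zero (snd (last ms))"
    using assms unfolding complete_I_def by auto
  define t where "t = start (length ms) - 1"
  have "0 < start (length ms)"
    using assms(2) le_block_start[of "length ms" M] by (meson length_greater_0_conv less_le_trans)
  then have t: "t < start (length ms)" "Suc t = start (length ms)"
    unfolding t_def by simp_all
  then have "ord_zero (init_seg W (sim_pos ms t))"
    using zero underS_sim_pos_empty_iff[OF legal t(1)]
      ord_zero_init_seg[OF Well_order_omega_times[OF Well_order_\<alpha>]] by simp
  moreover have "sim_play ms \<noteq> []" "last (sim_play ms) = (fst (ms ! blk t), init_seg W (sim_pos ms t))"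
    using t unfolding sim_play_def t_def by (auto simp: last_map)
  ultimately show ?thesis
    unfolding complete_I_def using legal_sim_play[OF legal] by simp
qed

lemma \<sigma>_answer:
  assumes legal: "legal_I \<alpha> ms" and t: "t < start (length ms)"
  shows "fd_subspace F (\<sigma>_space ms t)" "\<sigma>_space ms t \<subseteq> X \<inter> tail_space e F (fst (ms ! blk t))"
    "\<exists>f. (\<forall>s\<le>t. f s \<in> \<sigma>_space ms s) \<and> \<sigma>_vector ms t = (\<Sum>s\<le>t. f s)"
proof -
  let ?P = "take (Suc t) (sim_play ms)"
  have length: "length ?P = Suc t"
    using t by simp
  then have "?P \<noteq> []"
    by (metis Zero_not_Suc list.size(3))
  with legal_I_take[OF legal_sim_play[OF legal]] have "legal_II_answer e F X \<sigma> ?P"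
    using \<sigma>_strategy unfolding strategy_II_def by blast
  moreover have "take (Suc s) ?P = take (Suc s) (sim_play ms)" if "s \<le> t" for s
    using that by (simp add: min_def)
  moreover have "fst (?P ! t) = fst (ms ! blk t)"
    using t unfolding sim_play_def by simp
  moreover note length
  ultimately show "fd_subspace F (\<sigma>_space ms t)" "\<sigma>_space ms t \<subseteq> X \<inter> tail_space e F (fst (ms ! blk t))"
    "\<exists>f. (\<forall>s\<le>t. f s \<in> \<sigma>_space ms s) \<and> \<sigma>_vector ms t = (\<Sum>s\<le>t. f s)"
    unfolding legal_II_answer_def Let_def \<sigma>_space_def \<sigma>_vector_def by auto
qed

lemma sum_c_extend:
  fixes w :: "nat \<Rightarrow> 'b::real_vector"
  assumes "M l \<le> N"
  shows "(\<Sum>i<N. c l i *\<^sub>R w i) = (\<Sum>i<M l. c l i *\<^sub>R w i)"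
  by (rule sum.mono_neutral_right) (auto simp: assms c_vanishes)

lemma outcome_\<tau>_nth:
  assumes "l < length ms"
  shows "outcome \<tau> ms ! l = (\<Sum>i<start (length ms). c l i *\<^sub>R \<sigma>_vector ms i)"
proof -
  have "M l \<le> start (Suc l)" "M l \<le> start (length ms)"
    using assms block_start_ge[of M l] block_start_mono[of "Suc l" "length ms" M] by simp_all
  have "outcome \<tau> ms ! l = (\<Sum>i<start (Suc l). c l i *\<^sub>R \<sigma>_vector ms i)"
    using assms \<tau>_take[OF assms] unfolding outcome_def by simp
  also have "\<dots> = (\<Sum>i<M l. c l i *\<^sub>R \<sigma>_vector ms i)"
    by (rule sum_c_extend) fact
  also have "\<dots> = (\<Sum>i<start (length ms). c l i *\<^sub>R \<sigma>_vector ms i)"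
    by (rule sum_c_extend[symmetric]) fact
  finally show ?thesis .
qed

lemma \<tau>_wins:
  assumes "complete_I \<alpha> ms"
  shows "equivK K (outcome \<tau> ms) (map z [0..<length ms])"
proof (cases "ms = []")
  case False
  let ?N = "start (length ms)" and ?xs = "outcome \<sigma> (sim_play ms)" and ?ys = "map y [0..<start (length ms)]"
  have "equivK K ?xs ?ys"
    using \<sigma>_wins[OF complete_sim_play[OF assms False]] by simp
  then show ?thesis
  proof (rule equivK_combinations)
    show "length (outcome \<tau> ms) = length (map z [0..<length ms])"
      by (simp add: outcome_def)
  next
    fix l assume "l < length (outcome \<tau> ms)"
    then have "l < length ms"
      by (simp add: outcome_def)
    have "(\<Sum>i<length ?xs. c l i *\<^sub>R ?xs ! i) = (\<Sum>i<?N. c l i *\<^sub>R \<sigma>_vector ms i)"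
      by (rule sum.cong) (simp_all add: outcome_def \<sigma>_vector_def)
    then show "outcome \<tau> ms ! l = (\<Sum>i<length ?xs. c l i *\<^sub>R ?xs ! i)"
      using outcome_\<tau>_nth[OF \<open>l < length ms\<close>] by simp
  next
    fix l assume "l < length (map z [0..<length ms])"
    then have "M l \<le> ?N"
      using block_start_ge[of M l] block_start_mono[of "Suc l" "length ms" M] by simp
    have "map z [0..<length ms] ! l = (\<Sum>i<M l. c l i *\<^sub>R y i)"
      using \<open>l < length (map z [0..<length ms])\<close> z_expansion by simp
    also have "\<dots> = (\<Sum>i<?N. c l i *\<^sub>R y i)"
      by (rule sum_c_extend[symmetric]) fact
    also have "\<dots> = (\<Sum>i<length ?ys. c l i *\<^sub>R ?ys ! i)"
      by (rule sum.cong) simp_all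
    finally show "map z [0..<length ms] ! l = (\<Sum>i<length ?ys. c l i *\<^sub>R ?ys ! i)" .
  qed
qed (simp add: equivK_def outcome_def)

lemma \<tau>_space:
  assumes legal: "legal_I \<alpha> ms" and l: "length ms = Suc l"
  shows "fd_subspace F (fst (\<tau> ms))" "fst (\<tau> ms) \<subseteq> X \<inter> tail_space e F (fst (ms ! l))"
proof -
  let ?B = "{start l..<start (Suc l)}"
  have \<tau>: "fst (\<tau> ms) = spanF F (\<Union>t\<in>?B. \<sigma>_space ms t)"
    using \<tau>_take[of l ms] l by simp
  have block: "t < start (length ms)" "blk t = l" if "t \<in> ?B" for t
    using that l by (auto intro: block_index_eqI)
  show "fd_subspace F (fst (\<tau> ms))"
    unfolding \<tau> using subfield by (rule fd_subspace_spanF_UN) (use \<sigma>_answer(1)[OF legal] block in auto)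
  obtain S where X: "X = spanF F S"
    using X_spanF by blast
  have sub: "\<sigma>_space ms t \<subseteq> X \<inter> tail_space e F (fst (ms ! l))" if "t \<in> ?B" for t
    using \<sigma>_answer(2)[OF legal block(1)[OF that]] block(2)[OF that] by simp
  have "fst (\<tau> ms) \<subseteq> spanF F S"
    unfolding \<tau> by (rule spanF_subset_spanF[OF subfield]) (use sub X in blast)
  moreover have "\<sigma>_space ms t \<subseteq> spanF F (e ` {i. int i > fst (ms ! l)})" if "t \<in> ?B" for t
    using sub[OF that] unfolding tail_space_def by blast
  then have "fst (\<tau> ms) \<subseteq> spanF F (e ` {i. int i > fst (ms ! l)})"
    unfolding \<tau> by (intro spanF_subset_spanF[OF subfield]) blast
  ultimately show "fst (\<tau> ms) \<subseteq> X \<inter> tail_space e F (fst (ms ! l))"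
    unfolding X tail_space_def by blast
qed

text \<open>Nonzero because every legal position extends to a complete play, on which the answers of \<open>\<tau>\<close>
  are \<open>K\<close>-equivalent to the nonzero vectors \<open>z\<^sub>l\<close>.\<close>
lemma \<tau>_vector_nonzero:
  assumes legal: "legal_I \<alpha> ms" and l: "length ms = Suc l"
  shows "snd (\<tau> ms) \<noteq> 0"
proof -
  have "ms \<noteq> []"
    using l by auto
  then obtain ms' where "complete_I \<alpha> ms'" and prefix: "take (length ms) ms' = ms"
    using legal_I_completion[OF legal] by blast
  then have "l < length ms'" "take (Suc l) ms' = ms"
    using l by (metis Suc_le_eq length_take min.absorb_iff2 nat_le_linear not_less_eq_eq take_all)+
  have "outcome \<tau> ms' ! l \<noteq> 0"
    using equivK_nth_nonzero[OF \<tau>_wins[OF \<open>complete_I \<alpha> ms'\<close>]] \<open>l < length ms'\<close> z_nonzero by simp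
  then show ?thesis
    using \<open>l < length ms'\<close> \<open>take (Suc l) ms' = ms\<close> unfolding outcome_def by simp
qed

lemma \<tau>_vector_decomposition:
  assumes legal: "legal_I \<alpha> ms" and l: "length ms = Suc l"
  shows "\<exists>f. (\<forall>j\<le>l. f j \<in> fst (\<tau> (take (Suc j) ms))) \<and> snd (\<tau> ms) = (\<Sum>j\<le>l. f j)"
proof -
  let ?N = "start (Suc l)"
  obtain G where G: "\<And>i. i < ?N \<Longrightarrow> (\<forall>t\<le>i. G i t \<in> \<sigma>_space ms t) \<and> \<sigma>_vector ms i = (\<Sum>t\<le>i. G i t)"
    using \<sigma>_answer(3)[OF legal] l by metis
  define g where "g t = (\<Sum>i<?N. c l i *\<^sub>R (if t \<le> i then G i t else 0))" for t
  define f where "f j = (\<Sum>t\<in>{start j..<start (Suc j)}. g t)" for j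
  have "f j \<in> fst (\<tau> (take (Suc j) ms))" if "j \<le> l" for j
  proof -
    let ?B = "{start j..<start (Suc j)}"
    let ?U = "\<Union>t\<in>?B. \<sigma>_space ms t"
    have "j < length ms" "start (Suc j) \<le> ?N"
      using \<open>j \<le> l\<close> l by (simp_all add: block_start_mono)
    have "(if t \<le> i then G i t else 0) \<in> spanF F ?U" if "t \<in> ?B" "i < ?N" for i t
    proof (cases "t \<le> i")
      case True
      then have "G i t \<in> ?U"
        using G[OF \<open>i < ?N\<close>] that(1) by blast
      with True show ?thesis
        using spanF_superset[OF subfield \<open>G i t \<in> ?U\<close>] by simp
    qed (simp add: spanF_zero)
    then show ?thesis
      unfolding \<tau>_take[OF \<open>j < length ms\<close>] f_def g_def fst_conv
      by (intro spanF_sum spanF_scaleR[OF subfield] c_in_F finite_atLeastLessThan finite_lessThan) auto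
  qed
  moreover have "snd (\<tau> ms) = (\<Sum>j\<le>l. f j)"
  proof -
    have inner: "(\<Sum>t<?N. if t \<le> i then G i t else 0) = \<sigma>_vector ms i" if "i < ?N" for i
    proof -
      have "{..<?N} \<inter> {..i} = {..i}"
        using that by auto
      then show ?thesis
        using G[OF that] sum.inter_restrict[of "{..<?N}" "G i" "{..i}"] by simp
    qed
    have "snd (\<tau> ms) = (\<Sum>i<?N. c l i *\<^sub>R \<sigma>_vector ms i)"
      using \<tau>_take[of l ms] l by simp
    also have "\<dots> = (\<Sum>i<?N. \<Sum>t<?N. c l i *\<^sub>R (if t \<le> i then G i t else 0))"
      using inner by (intro sum.cong) (simp_all add: scaleR_sum_right[symmetric])
    also have "\<dots> = (\<Sum>t<?N. g t)"
      unfolding g_def by (rule sum.swap)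
    also have "\<dots> = (\<Sum>j<Suc l. f j)"
      unfolding f_def by (rule sum_blocks[symmetric])
    finally show ?thesis
      by (simp add: lessThan_Suc_atMost)
  qed
  ultimately show ?thesis
    by blast
qed

lemma strategy_\<tau>: "strategy_II e F X \<alpha> \<tau>"
  unfolding strategy_II_def
proof (intro allI impI)
  fix ms assume "ms \<noteq> [] \<and> legal_I \<alpha> ms"
  then obtain l where legal: "legal_I \<alpha> ms" and l: "length ms = Suc l"
    by (metis length_greater_0_conv Suc_pred)
  then have "take (Suc l) ms = ms"
    by simp
  then show "legal_II_answer e F X \<tau> ms"
    using \<tau>_space[OF legal l] \<tau>_vector_nonzero[OF legal l] \<tau>_vector_decomposition[OF legal l] l
    unfolding legal_II_answer_def Let_def by simp
qed

lemma II_wins_transfer: "II_wins e F X \<alpha> (\<lambda>vs. equivK K vs (map z [0..<length vs]))"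
  unfolding II_wins_def using strategy_\<tau> \<tau>_wins by (auto simp: outcome_def)

end

theorem lemma4p5:
  fixes e :: "nat \<Rightarrow> 'a::banach" and F :: "real set"
    and X :: "'a set" and y :: "nat \<Rightarrow> 'a" and \<alpha> :: "'o rel" and K :: real
  assumes "schauder_basis e"
    and "countable F" and "subfield_real F"
    and "\<forall>m a. (\<forall>n. a n \<in> F) \<longrightarrow> norm (\<Sum>n\<le>m. a n *\<^sub>R e n) \<in> F"
    and "block_subspace e F X"
    and "block_seq e F y"
    and "Well_order \<alpha>" and "countable (Field \<alpha>)"
    and "K \<ge> 1"
    and "II_wins e F X (omega_times \<alpha>) (\<lambda>xs. equivK K xs (map y [0..<length xs]))"
  shows "\<forall>z. block_seq e F z \<and> range z \<subseteq> spanF F (range y) \<longrightarrow>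
           II_wins e F X \<alpha> (\<lambda>vs. equivK K vs (map z [0..<length vs]))"
proof (intro allI impI)
  fix z assume z: "block_seq e F z \<and> range z \<subseteq> spanF F (range y)"
  obtain \<sigma> where \<sigma>: "strategy_II e F X (omega_times \<alpha>) \<sigma>"
    "\<And>ms. complete_I (omega_times \<alpha>) ms \<Longrightarrow> equivK K (outcome \<sigma> ms) (map y [0..<length ms])"
    using assms(10) unfolding II_wins_def by (auto simp: outcome_def)
  have "\<forall>l. \<exists>c M. (\<forall>i. c i \<in> F) \<and> (\<forall>i\<ge>M. c i = 0) \<and> z l = (\<Sum>i<M. c i *\<^sub>R y i)"
    using z spanF_range_expansion[OF assms(3)] by blast
  then obtain c M where "\<And>l i. c l i \<in> F" "\<And>l i. M l \<le> i \<Longrightarrow> c l i = 0"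
    "\<And>l. z l = (\<Sum>i<M l. c l i *\<^sub>R y i)"
    by metis
  then interpret strategy_transfer e F X \<alpha> \<sigma> y z c M K
    using assms(3,5,7) \<sigma> z by unfold_locales (auto simp: block_subspace_def block_seq_def)
  show "II_wins e F X \<alpha> (\<lambda>vs. equivK K vs (map z [0..<length vs]))"
    by (rule II_wins_transfer)
qed

end
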